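(* Let $n_0$ be a sufficiently large universal constant. If $n \ge n_0$ and $\beta = 8 n$, then $|\mathcal{G}_{2n,\beta}| \ge 2^{n^2/2}$.
   Context: Fix disjoint vertex sets $L,R$ with $|L|=|R|=n$ and a fixed perfect matching $M$ of directed edges from $L$ to $R$. $\mathcal{G}_{2n}$ is the set of all unweighted directed graphs on vertex set $L\cup R$ whose set of edges from $L$ to $R$ is exactly $M$, whose edges from $R$ to $L$ form an arbitrary subset of $R\times L$, and which have no other edges (so $|\mathcal{G}_{2n}|=2^{n^2}$). A directed graph (with unit weights) is $\beta$-balanced if it is strongly connected and for every $\varnothing\ne S\subsetneq V$ the number of edges leaving $S$ is at most $\beta$ times the number of edges entering $S$. $\mathcal{G}_{2n,\beta}\subseteq\mathcal{G}_{2n}$ is the subset of $\beta$-balanced graphs. *)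

theory Defs
  imports Complex_Main
begin

definition Lset :: "nat \<Rightarrow> nat set" where
  "Lset n = {0..<n}"

definition Rset :: "nat \<Rightarrow> nat set" where
  "Rset n = {n..<2*n}"

definition Vset :: "nat \<Rightarrow> nat set" where
  "Vset n = Lset n \<union> Rset n"

definition Mmatch :: "nat \<Rightarrow> (nat \<times> nat) set" where
  "Mmatch n = {(i, n + i) | i. i < n}"

definition G2n :: "nat \<Rightarrow> (nat \<times> nat) set set" where
  "G2n n = {E. \<exists>F. F \<subseteq> Rset n \<times> Lset n \<and> E = Mmatch n \<union> F}"

definition strongly_connected :: "'a set \<Rightarrow> ('a \<times> 'a) set \<Rightarrow> bool" where
  "strongly_connected V E \<longleftrightarrow> (\<forall>u\<in>V. \<forall>v\<in>V. (u, v) \<in> (E \<inter> (V \<times> V))\<^sup>*)"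

definition out_edges :: "('a \<times> 'a) set \<Rightarrow> 'a set \<Rightarrow> ('a \<times> 'a) set" where
  "out_edges E S = {(u, v) \<in> E. u \<in> S \<and> v \<notin> S}"

definition in_edges :: "('a \<times> 'a) set \<Rightarrow> 'a set \<Rightarrow> ('a \<times> 'a) set" where
  "in_edges E S = {(u, v) \<in> E. u \<notin> S \<and> v \<in> S}"

definition balanced :: "'a set \<Rightarrow> ('a \<times> 'a) set \<Rightarrow> real \<Rightarrow> bool" where
  "balanced V E \<beta> \<longleftrightarrow> strongly_connected V E \<and>
     (\<forall>S. S \<noteq> {} \<and> S \<subset> V \<longrightarrow>
        real (card (out_edges E S)) \<le> \<beta> * real (card (in_edges E S)))"

definition G2n_beta :: "nat \<Rightarrow> real \<Rightarrow> (nat \<times> nat) set set" where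
  "G2n_beta n \<beta> = {E \<in> G2n n. balanced (Vset n) E \<beta>}"

end

theory Submission
  imports Defs
begin

text \<open>Let \<open>k = \<lfloor>n/4\<rfloor>\<close>. Put into the graph every edge from \<open>R\<close> to \<open>L\<close> that leaves one of the
first \<open>k\<close> right vertices or enters one of the first \<open>k\<close> left vertices, and choose the
remaining \<open>(n - k)\<^sup>2 \<ge> n\<^sup>2/2\<close> edges of \<open>R \<times> L\<close> freely. Each such graph is strongly connected
through vertex \<open>0\<close>. For a cut \<open>S\<close>, let \<open>X\<close> be its left vertices and \<open>Y\<close> the indices of its
right vertices; at most \<open>|X - Y| + |Y| (n - |X|)\<close> edges leave \<open>S\<close>. If some right vertex \<open>n + j\<close>
with \<open>j < k\<close> lies outside \<open>S\<close>, its fixed edges into \<open>X\<close> make at least \<open>max |X| |Y|\<close> edges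
enter \<open>S\<close>; if all right vertices lie in \<open>S\<close>, the matching edges into \<open>S\<close> number \<open>n - |X|\<close>;
otherwise a right vertex outside \<open>S\<close> together with the matching edges into the first \<open>k\<close>
right vertices yields at least \<open>k\<close> entering edges. In all cases
\<open>k |out(S)| \<le> n (n + 1) |in(S)|\<close>, and \<open>n + 1 \<le> 8 k\<close>.\<close>

definition fixed_edges :: "nat \<Rightarrow> nat \<Rightarrow> (nat \<times> nat) set" where
  "fixed_edges n k = {(r, l) \<in> Rset n \<times> Lset n. r < n + k \<or> l < k}"

definition free_edges :: "nat \<Rightarrow> nat \<Rightarrow> (nat \<times> nat) set" where
  "free_edges n k = {n + k..<2 * n} \<times> {k..<n}"

lemma Mmatch_Un_subset_Vset_Times:
  assumes "F \<subseteq> Rset n \<times> Lset n"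
  shows "Mmatch n \<union> F \<subseteq> Vset n \<times> Vset n"
  using assms by (auto simp: Mmatch_def Vset_def Lset_def Rset_def)

lemma finite_G2n: "finite (G2n n)"
proof (rule finite_subset)
  show "G2n n \<subseteq> Pow (Vset n \<times> Vset n)"
    unfolding G2n_def using Mmatch_Un_subset_Vset_Times by blast
qed (simp add: Vset_def Lset_def Rset_def)

lemma strongly_connectedI_hub:
  assumes "\<And>u. u \<in> V \<Longrightarrow> (u, h) \<in> (E \<inter> V \<times> V)\<^sup>*"
    and "\<And>v. v \<in> V \<Longrightarrow> (h, v) \<in> (E \<inter> V \<times> V)\<^sup>*"
  shows "strongly_connected V E"
  unfolding strongly_connected_def using assms rtrancl_trans by fast

lemma strongly_connected_Mmatch_Un:
  assumes "0 < k" "k \<le> n" "fixed_edges n k \<subseteq> F" "F \<subseteq> Rset n \<times> Lset n"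
  shows "strongly_connected (Vset n) (Mmatch n \<union> F)"
proof (rule strongly_connectedI_hub[where h = 0])
  let ?E = "(Mmatch n \<union> F) \<inter> Vset n \<times> Vset n"
  have match: "(i, n + i) \<in> ?E" if "i < n" for i
    using that by (auto simp: Mmatch_def Vset_def Lset_def Rset_def)
  have fixed: "(r, l) \<in> ?E" if "n \<le> r" "r < 2 * n" "l < n" "r < n + k \<or> l < k" for r l
    using assms(3) that by (auto simp: fixed_edges_def Vset_def Lset_def Rset_def)
  show "(u, 0) \<in> ?E\<^sup>*" if "u \<in> Vset n" for u
  proof (cases "u < n")
    case True
    then have "(u, n + u) \<in> ?E" "(n + u, 0) \<in> ?E"
      using match fixed[of "n + u" 0] assms(1) by auto
    then show ?thesis by (rule converse_rtrancl_into_rtrancl[OF _ r_into_rtrancl])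
  next
    case False
    with that fixed[of u 0] assms(1) show ?thesis
      by (auto simp: Vset_def Lset_def Rset_def)
  qed
  have zero_n: "(0, n) \<in> ?E"
    using match[of 0] assms(1,2) by simp
  have n_reaches: "(n, v) \<in> ?E\<^sup>*" if "v \<in> Vset n" for v
  proof (cases "v < n")
    case True
    then have "(n, v) \<in> ?E"
      using fixed[of n v] assms(1) by simp
    then show ?thesis ..
  next
    case False
    with that have "(n, v - n) \<in> ?E" "(v - n, v) \<in> ?E"
      using fixed[of n "v - n"] match[of "v - n"] assms(1)
      by (auto simp: Vset_def Lset_def Rset_def)
    then show ?thesis by (rule converse_rtrancl_into_rtrancl[OF _ r_into_rtrancl])
  qed
  show "(0, v) \<in> ?E\<^sup>*" if "v \<in> Vset n" for v
    using zero_n n_reaches[OF that] by (rule converse_rtrancl_into_rtrancl)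
qed

lemma card_out_edges_Mmatch_Un_le:
  fixes S :: "nat set"
  assumes "F \<subseteq> Rset n \<times> Lset n"
  defines "X \<equiv> {i. i < n \<and> i \<in> S}" and "Y \<equiv> {i. i < n \<and> n + i \<in> S}"
  shows "card (out_edges (Mmatch n \<union> F) S) \<le> card (X - Y) + card Y * (n - card X)"
proof -
  have finite: "finite X" "finite Y"
    by (simp_all add: X_def Y_def)
  have out: "out_edges (Mmatch n \<union> F) S \<subseteq> (\<lambda>i. (i, n + i)) ` (X - Y) \<union> (\<lambda>i. n + i) ` Y \<times> ({0..<n} - X)"
  proof
    fix e assume "e \<in> out_edges (Mmatch n \<union> F) S"
    then obtain u v where e: "e = (u, v)" "(u, v) \<in> Mmatch n \<union> F" "u \<in> S" "v \<notin> S"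
      by (auto simp: out_edges_def)
    show "e \<in> (\<lambda>i. (i, n + i)) ` (X - Y) \<union> (\<lambda>i. n + i) ` Y \<times> ({0..<n} - X)"
    proof (cases "(u, v) \<in> Mmatch n")
      case True
      with e show ?thesis by (auto simp: Mmatch_def X_def Y_def)
    next
      case False
      with e assms(1) have "n \<le> u" "u < 2 * n" "v < n"
        by (auto simp: Rset_def Lset_def)
      with e have "u - n \<in> Y" "u = n + (u - n)" "v \<in> {0..<n} - X"
        by (auto simp: X_def Y_def)
      with e show ?thesis by blast
    qed
  qed
  have "card (out_edges (Mmatch n \<union> F) S)
      \<le> card ((\<lambda>i. (i, n + i)) ` (X - Y) \<union> (\<lambda>i. n + i) ` Y \<times> ({0..<n} - X))"
    using out finite by (intro card_mono) auto
  also have "\<dots> \<le> card ((\<lambda>i. (i, n + i)) ` (X - Y)) + card ((\<lambda>i. n + i) ` Y \<times> ({0..<n} - X))"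
    by (rule card_Un_le)
  also have "\<dots> \<le> card (X - Y) + card Y * (n - card X)"
  proof -
    have "card ({0..<n} - X) = n - card X"
      by (simp add: X_def card_Diff_subset finite subset_eq)
    then show ?thesis
      using finite by (simp add: card_cartesian_product card_image card_image_le inj_on_def)
  qed
  finally show ?thesis .
qed

lemma card_in_edges_Mmatch_Un_ge:
  fixes S :: "nat set"
  assumes "F \<subseteq> Rset n \<times> Lset n" and "G \<subseteq> in_edges (Mmatch n \<union> F) S \<inter> F"
  defines "X \<equiv> {i. i < n \<and> i \<in> S}" and "Y \<equiv> {i. i < n \<and> n + i \<in> S}"
  shows "card (Y - X) + card G \<le> card (in_edges (Mmatch n \<union> F) S)"
proof -
  have finite_in: "finite (in_edges (Mmatch n \<union> F) S)"
    by (rule finite_subset[of _ "Vset n \<times> Vset n"])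
      (use Mmatch_Un_subset_Vset_Times[OF assms(1)] in \<open>auto simp: in_edges_def Vset_def Lset_def Rset_def\<close>)
  have matched: "(\<lambda>i. (i, n + i)) ` (Y - X) \<subseteq> in_edges (Mmatch n \<union> F) S"
    by (auto simp: in_edges_def Mmatch_def X_def Y_def)
  have "(\<lambda>i. (i, n + i)) ` (Y - X) \<inter> G = {}"
    using assms(1,2) by (auto simp: Rset_def Lset_def)
  then have "card (Y - X) + card G = card ((\<lambda>i. (i, n + i)) ` (Y - X) \<union> G)"
    using assms(2) finite_in
    by (subst card_Un_disjoint) (auto simp: card_image inj_on_def Y_def intro: finite_subset)
  also have "\<dots> \<le> card (in_edges (Mmatch n \<union> F) S)"
    using matched assms(2) finite_in by (intro card_mono) auto
  finally show ?thesis .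
qed

lemma card_out_edges_Mmatch_Un_le_card_in_edges:
  fixes S :: "nat set"
  assumes "k \<le> n" "fixed_edges n k \<subseteq> F" "F \<subseteq> Rset n \<times> Lset n"
  shows "k * card (out_edges (Mmatch n \<union> F) S) \<le> n * (n + 1) * card (in_edges (Mmatch n \<union> F) S)"
proof -
  define X where "X = {i. i < n \<and> i \<in> S}"
  define Y where "Y = {i. i < n \<and> n + i \<in> S}"
  let ?out = "card (out_edges (Mmatch n \<union> F) S)"
  let ?in = "card (in_edges (Mmatch n \<union> F) S)"
  have out: "?out \<le> card (X - Y) + card Y * (n - card X)"
    using card_out_edges_Mmatch_Un_le[OF assms(3)] by (simp add: X_def Y_def)
  have in_ge: "card (Y - X) + card G \<le> ?in" if "G \<subseteq> in_edges (Mmatch n \<union> F) S \<inter> F" for G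
    using card_in_edges_Mmatch_Un_ge[OF assms(3) that] by (simp add: X_def Y_def)
  have fixed_star: "{n + j} \<times> A \<subseteq> in_edges (Mmatch n \<union> F) S \<inter> F"
    if "j < n" "j \<notin> Y" "A \<subseteq> X" "j < k \<or> A \<subseteq> {0..<k}" for j A
  proof -
    have "(n + j, l) \<in> fixed_edges n k" if "l \<in> A" for l
      using that \<open>j < n\<close> \<open>A \<subseteq> X\<close> \<open>j < k \<or> A \<subseteq> {0..<k}\<close>
      by (auto simp: fixed_edges_def Rset_def Lset_def X_def)
    with assms(2) have "(n + j, l) \<in> F" if "l \<in> A" for l
      using that by blast
    with that show ?thesis
      by (auto simp: in_edges_def X_def Y_def)
  qed
  have X_sub: "X \<subseteq> {0..<n}" and Y_sub: "Y \<subseteq> {0..<n}"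
    by (auto simp: X_def Y_def)
  then have finite: "finite X" "finite Y" and card_le: "card X \<le> n" "card Y \<le> n"
    by (auto intro: finite_subset dest: card_mono[rotated])
  have out_le: "?out \<le> card X + card Y * n"
    using out card_mono[OF finite(1) Diff_subset, of Y]
      mult_le_mono2[OF diff_le_self[of n "card X"], of "card Y"]
    by linarith
  consider (small_outside) j where "j < k" "j \<notin> Y"
    | (all_inside) "Y = {0..<n}"
    | (outside) j where "{0..<k} \<subseteq> Y" "j < n" "j \<notin> Y"
    using Y_sub by fastforce
  then show ?thesis
  proof cases
    case (small_outside j)
    have "card (Y - X) + card X \<le> ?in"
      using in_ge[OF fixed_star[of j X]] small_outside assms(1)
      by (simp add: card_cartesian_product)
    moreover have "card Y \<le> card (Y - X) + card X"
      using card_Un_le[of "Y - X" X] card_mono[of "Y - X \<union> X" Y] finite by auto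
    ultimately have "card X \<le> ?in" "card Y \<le> ?in"
      by linarith+
    have "?out \<le> card X + card Y * n"
      by (fact out_le)
    also have "\<dots> \<le> ?in + ?in * n"
      using \<open>card X \<le> ?in\<close> \<open>card Y \<le> ?in\<close> by (intro add_mono mult_le_mono1)
    finally have "?out \<le> (n + 1) * ?in"
      by (simp add: algebra_simps)
    then have "k * ?out \<le> k * ((n + 1) * ?in)"
      by (rule mult_le_mono2)
    also have "\<dots> \<le> n * (n + 1) * ?in"
      unfolding mult.assoc using assms(1) by (rule mult_le_mono1)
    finally show ?thesis .
  next
    case all_inside
    with X_sub have "card (X - Y) = 0" "card Y = n" "card (Y - X) = n - card X"
      by (auto simp: card_Diff_subset finite)
    then have "?out \<le> n * (n - card X)" and "n - card X \<le> ?in"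
      using out in_ge[of "{}"] by simp_all
    then have "k * ?out \<le> k * (n * ?in)"
      by (meson mult_le_mono2 le_trans)
    also have "\<dots> \<le> n * (n + 1) * ?in"
    proof -
      have "k * n \<le> n * (n + 1)"
        using mult_le_mono[OF assms(1) le_add1] .
      then show ?thesis
        unfolding mult.assoc[symmetric] by (rule mult_le_mono1)
    qed
    finally show ?thesis .
  next
    case (outside j)
    have "card ({0..<k} - X) \<le> card (Y - X)"
      using outside(1) finite(2) by (intro card_mono) auto
    moreover have "card (Y - X) + card (X \<inter> {0..<k}) \<le> ?in"
      using in_ge[OF fixed_star[of j "X \<inter> {0..<k}"]] outside
      by (simp add: card_cartesian_product)
    moreover have "card ({0..<k} - X) + card (X \<inter> {0..<k}) = k"
      using card_Int_Diff[of "{0..<k}" X] by (simp add: Int_commute)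
    ultimately have "k \<le> ?in"
      by linarith
    have out_bound: "?out \<le> n + n * n"
      using out_le card_le(1) mult_le_mono1[OF card_le(2), of n] by linarith
    show ?thesis
      using mult_le_mono[OF \<open>k \<le> ?in\<close> out_bound] by (simp add: algebra_simps)
  qed
qed

lemma balanced_Mmatch_Un:
  assumes "0 < k" "k \<le> n" "n + 1 \<le> 8 * k" "fixed_edges n k \<subseteq> F" "F \<subseteq> Rset n \<times> Lset n"
  shows "balanced (Vset n) (Mmatch n \<union> F) (8 * real n)"
  unfolding balanced_def
proof (intro conjI allI impI)
  show "strongly_connected (Vset n) (Mmatch n \<union> F)"
    using assms(1,2,4,5) by (rule strongly_connected_Mmatch_Un)
next
  fix S :: "nat set"
  let ?out = "card (out_edges (Mmatch n \<union> F) S)"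
  let ?in = "card (in_edges (Mmatch n \<union> F) S)"
  have "k * ?out \<le> n * (n + 1) * ?in"
    using assms(2,4,5) by (rule card_out_edges_Mmatch_Un_le_card_in_edges)
  also have "\<dots> \<le> n * (8 * k) * ?in"
    using assms(3) by (intro mult_le_mono1 mult_le_mono2)
  finally have "?out \<le> 8 * n * ?in"
    using assms(1) by (simp add: algebra_simps)
  then show "real ?out \<le> 8 * real n * real ?in"
    by (metis of_nat_le_iff of_nat_mult of_nat_numeral)
qed

lemma two_pow_card_free_edges_le_card_G2n_beta:
  assumes "0 < k" "k \<le> n" "n + 1 \<le> 8 * k"
  shows "2 ^ card (free_edges n k) \<le> card (G2n_beta n (8 * real n))"
proof -
  let ?graph = "\<lambda>F. Mmatch n \<union> (fixed_edges n k \<union> F)"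
  have free_sub: "free_edges n k \<subseteq> Rset n \<times> Lset n"
    by (auto simp: free_edges_def Rset_def Lset_def)
  have fixed_sub: "fixed_edges n k \<subseteq> Rset n \<times> Lset n"
    by (auto simp: fixed_edges_def)
  have "?graph ` Pow (free_edges n k) \<subseteq> G2n_beta n (8 * real n)"
  proof
    fix E assume "E \<in> ?graph ` Pow (free_edges n k)"
    then obtain F where F: "F \<subseteq> free_edges n k" "E = ?graph F"
      by auto
    with free_sub fixed_sub have sub: "fixed_edges n k \<union> F \<subseteq> Rset n \<times> Lset n"
      by blast
    then have "E \<in> G2n n"
      using F(2) by (auto simp: G2n_def)
    moreover have "balanced (Vset n) E (8 * real n)"
      using balanced_Mmatch_Un[OF assms Un_upper1 sub] F(2) by simp
    ultimately show "E \<in> G2n_beta n (8 * real n)"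
      by (simp add: G2n_beta_def)
  qed
  moreover have "inj_on ?graph (Pow (free_edges n k))"
  proof (rule inj_onI)
    have disjoint: "(Mmatch n \<union> fixed_edges n k) \<inter> free_edges n k = {}"
      by (auto simp: Mmatch_def fixed_edges_def free_edges_def)
    fix F F' assume "F \<in> Pow (free_edges n k)" "F' \<in> Pow (free_edges n k)" "?graph F = ?graph F'"
    then have "?graph F \<inter> free_edges n k = F" "?graph F \<inter> free_edges n k = F'"
      using disjoint by blast+
    then show "F = F'"
      by simp
  qed
  ultimately have "card (Pow (free_edges n k)) \<le> card (G2n_beta n (8 * real n))"
    using finite_G2n by (intro card_inj_on_le) (auto simp: G2n_beta_def)
  then show ?thesis
    by (simp add: card_Pow free_edges_def)
qed

theorem lemma5:
  shows "\<exists>n0::nat. \<forall>n\<ge>n0.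
     (2::real) powr (real n ^ 2 / 2) \<le> real (card (G2n_beta n (8 * real n)))"
proof (intro exI[of _ 8] allI impI)
  fix n :: nat
  assume "8 \<le> n"
  define k where "k = n div 4"
  have k: "0 < k" "k \<le> n" "n + 1 \<le> 8 * k" "3 * n \<le> 4 * (n - k)"
    using \<open>8 \<le> n\<close> by (auto simp: k_def)
  have "(3 * n) * (3 * n) \<le> (4 * (n - k)) * (4 * (n - k))"
    using mult_le_mono[OF k(4) k(4)] .
  then have "n * n \<le> 2 * card (free_edges n k)"
    by (simp add: free_edges_def)
  then have "real (n * n) \<le> real (2 * card (free_edges n k))"
    by (simp only: of_nat_le_iff)
  then have "real n ^ 2 / 2 \<le> real (card (free_edges n k))"
    by (simp add: power2_eq_square)
  then have "(2::real) powr (real n ^ 2 / 2) \<le> 2 ^ card (free_edges n k)"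
    by (simp add: powr_realpow[symmetric])
  also have "\<dots> \<le> real (card (G2n_beta n (8 * real n)))"
    using two_pow_card_free_edges_le_card_G2n_beta[OF k(1-3)]
    by (metis of_nat_le_iff of_nat_numeral of_nat_power)
  finally show "(2::real) powr (real n ^ 2 / 2) \<le> real (card (G2n_beta n (8 * real n)))" .
qed

end
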